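(* Let $G$ be a finite group. Then $G$ is an elementary abelian $2$-group if and only if the set of maximal sum-free sets in $G$ coincides with the set $\{G\setminus M : M \text{ a maximal subgroup of } G\}$ of complements of the maximal subgroups of $G$, and $\Phi(G)=1$, where $\Phi(G)$ is the Frattini subgroup of $G$ (the intersection of all maximal subgroups of $G$).
   Context: A non-empty subset $S$ of a group $G$ is called sum-free if for all $s_1,s_2\in S$ (including the case $s_1=s_2$) one has $s_1s_2\notin S$. A maximal sum-free set in a finite group $G$ means a sum-free set of largest possible cardinality among all sum-free sets in $G$ (maximal by cardinality). *)

theory Defs
  imports "HOL-Algebra.Algebra"
begin

definition sum_free :: "('a, 'b) monoid_scheme \<Rightarrow> 'a set \<Rightarrow> bool" where
  "sum_free G S \<longleftrightarrow> S \<noteq> {} \<and> S \<subseteq> carrier G \<and>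
     (\<forall>s1\<in>S. \<forall>s2\<in>S. s1 \<otimes>\<^bsub>G\<^esub> s2 \<notin> S)"

definition max_sum_free :: "('a, 'b) monoid_scheme \<Rightarrow> 'a set \<Rightarrow> bool" where
  "max_sum_free G S \<longleftrightarrow> sum_free G S \<and> (\<forall>T. sum_free G T \<longrightarrow> card T \<le> card S)"

definition maximal_subgroup :: "'a set \<Rightarrow> ('a, 'b) monoid_scheme \<Rightarrow> bool" where
  "maximal_subgroup M G \<longleftrightarrow> subgroup M G \<and> M \<noteq> carrier G \<and>
     (\<forall>K. subgroup K G \<and> M \<subseteq> K \<longrightarrow> K = M \<or> K = carrier G)"

text \<open>Frattini subgroup: intersection of all maximal subgroups (the whole group if there are none).\<close>
definition frattini :: "('a, 'b) monoid_scheme \<Rightarrow> 'a set" where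
  "frattini G = carrier G \<inter> \<Inter> {M. maximal_subgroup M G}"

definition elementary_abelian_2_group :: "('a, 'b) monoid_scheme \<Rightarrow> bool" where
  "elementary_abelian_2_group G \<longleftrightarrow> comm_group G \<and>
     (\<forall>x\<in>carrier G. x \<otimes>\<^bsub>G\<^esub> x = \<one>\<^bsub>G\<^esub>)"

end

theory Submission
  imports Defs
begin

text \<open>
  A sum-free set S of a finite group is disjoint from each translate s S with s \<in> S, so
  |S| \<le> |G|/2, with equality for the complement of an index-two subgroup.  Conversely, if
  |S| = |G|/2 then every translate s S fills the complement M of S exactly, and this forces M to
  be a subgroup (of index two).  In an elementary abelian 2-group every maximal subgroup M has
  index two, since M \<union> g M is a subgroup, and every x \<noteq> 1 is avoided by some maximal
  subgroup.  Conversely, if the complements of all maximal subgroups are sum-free then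
  x\<cdot>x lies in every maximal subgroup, hence in the Frattini subgroup; if that is trivial,
  G has exponent two and is therefore abelian.
\<close>

lemma (in monoid) one_notin_sum_free: "sum_free G S \<Longrightarrow> \<one> \<notin> S"
  unfolding sum_free_def by force

lemma sum_free_translate_disjoint:
  "sum_free G S \<Longrightarrow> s \<in> S \<Longrightarrow> (\<otimes>\<^bsub>G\<^esub>) s ` S \<inter> S = {}"
  unfolding sum_free_def by blast

context group
begin

lemma card_translate:
  assumes "A \<subseteq> carrier G" "g \<in> carrier G"
  shows "card ((\<otimes>) g ` A) = card A"
  using inj_on_subset[OF inj_on_cmult[OF assms(2)] assms(1)] by (simp add: card_image)

lemma translate_subgroup_disjoint:
  assumes M: "subgroup M G" and g: "g \<in> carrier G - M"
  shows "(\<otimes>) g ` M \<inter> M = {}"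
proof -
  have "g \<otimes> m \<notin> M" if m: "m \<in> M" for m
  proof
    assume "g \<otimes> m \<in> M"
    then have "(g \<otimes> m) \<otimes> inv m \<in> M"
      using m M by (simp add: subgroup.m_closed subgroup.m_inv_closed)
    moreover have "(g \<otimes> m) \<otimes> inv m = g"
      using g m subgroup.mem_carrier[OF M] by (simp add: m_assoc)
    ultimately show False using g by simp
  qed
  then show ?thesis by blast
qed

lemma card_complement_of_half:
  assumes "finite (carrier G)" "A \<subseteq> carrier G" "2 * card A = order G"
  shows "card (carrier G - A) = card A"
  using assms card_Diff_subset[OF finite_subset[OF assms(2,1)] assms(2)] by (simp add: order_def)

lemma translate_eq_complement_of_half:
  assumes fin: "finite (carrier G)"
    and A: "A \<subseteq> carrier G" "2 * card A = order G"
    and g: "g \<in> carrier G" and disj: "(\<otimes>) g ` A \<inter> A = {}"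
  shows "(\<otimes>) g ` A = carrier G - A"
proof (rule card_subset_eq)
  show "finite (carrier G - A)" using fin by simp
  show "(\<otimes>) g ` A \<subseteq> carrier G - A" using A g disj by auto
  show "card ((\<otimes>) g ` A) = card (carrier G - A)"
    using card_translate[OF A(1) g] card_complement_of_half[OF fin A] by simp
qed

lemma card_sum_free_le:
  assumes fin: "finite (carrier G)" and S: "sum_free G S"
  shows "2 * card S \<le> order G"
proof -
  obtain s where s: "s \<in> S" and S_sub: "S \<subseteq> carrier G"
    using S unfolding sum_free_def by blast
  have fin_S: "finite S" using S_sub fin finite_subset by blast
  have "(\<otimes>) s ` S \<inter> S = {}" using sum_free_translate_disjoint[OF S s] .
  then have "card ((\<otimes>) s ` S \<union> S) = 2 * card S"
    using card_Un_disjoint[OF _ fin_S] card_translate[OF S_sub] s S_sub fin_S by auto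
  moreover have "(\<otimes>) s ` S \<union> S \<subseteq> carrier G" using s S_sub by auto
  ultimately show ?thesis using card_mono[OF fin] by (metis order_def)
qed

lemma complement_of_index_two_nonempty:
  assumes "finite (carrier G)" "M \<subseteq> carrier G" "2 * card M = order G"
  shows "carrier G - M \<noteq> {}"
proof
  assume "carrier G - M = {}"
  then have "M = carrier G" using assms(2) by blast
  then show False using assms(1,3) order_gt_0_iff_finite by (simp add: order_def)
qed

lemma translate_index_two_subgroup:
  assumes fin: "finite (carrier G)" and M: "subgroup M G" "2 * card M = order G"
    and g: "g \<in> carrier G - M"
  shows "(\<otimes>) g ` M = carrier G - M"
  using translate_eq_complement_of_half[OF fin subgroup.subset[OF M(1)] M(2) _
      translate_subgroup_disjoint[OF M(1) g]] g
  by blast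

lemma sum_free_complement_of_index_two:
  assumes fin: "finite (carrier G)" and M: "subgroup M G" "2 * card M = order G"
  shows "sum_free G (carrier G - M)"
  unfolding sum_free_def
proof (intro conjI ballI)
  show "carrier G - M \<noteq> {}"
    using complement_of_index_two_nonempty[OF fin subgroup.subset[OF M(1)] M(2)] .
  fix a b assume a: "a \<in> carrier G - M" and b: "b \<in> carrier G - M"
  have "inv a \<in> carrier G - M"
    using a subgroup.m_inv_closed[OF M(1), of "inv a"] by auto
  then have "b \<in> (\<otimes>) (inv a) ` M" using b translate_index_two_subgroup[OF fin M] by blast
  then obtain m where m: "m \<in> M" "b = inv a \<otimes> m" by blast
  have "a \<otimes> b = m"
    using a m subgroup.mem_carrier[OF M(1)] by (simp add: m_assoc[symmetric])
  then show "a \<otimes> b \<notin> carrier G - M" using m by simp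
qed auto

lemma index_two_subgroup_maximal:
  assumes fin: "finite (carrier G)" and M: "subgroup M G" "2 * card M = order G"
  shows "maximal_subgroup M G"
  unfolding maximal_subgroup_def
proof (intro conjI allI impI)
  show "M \<noteq> carrier G"
    using complement_of_index_two_nonempty[OF fin subgroup.subset[OF M(1)] M(2)] by blast
  fix K assume "subgroup K G \<and> M \<subseteq> K"
  then have K: "subgroup K G" "M \<subseteq> K" by auto
  show "K = M \<or> K = carrier G"
  proof (cases "K = M")
    case False
    then obtain g where g: "g \<in> K" "g \<notin> M" using K(2) by blast
    have "carrier G - M = (\<otimes>) g ` M"
      using translate_index_two_subgroup[OF fin M] subgroup.mem_carrier[OF K(1) g(1)] g(2)
      by simp
    also have "\<dots> \<subseteq> K" using subgroup.m_closed[OF K(1) g(1)] K(2) by blast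
    finally show ?thesis using K(2) subgroup.subset[OF K(1)] by blast
  qed simp
qed (rule M(1))

lemma max_sum_free_complement_of_index_two:
  assumes fin: "finite (carrier G)" and M: "subgroup M G" "2 * card M = order G"
  shows "max_sum_free G (carrier G - M)"
proof -
  have "2 * card (carrier G - M) = order G"
    using card_complement_of_half[OF fin subgroup.subset[OF M(1)] M(2)] M(2) by simp
  then show ?thesis
    unfolding max_sum_free_def
    using sum_free_complement_of_index_two[OF assms] card_sum_free_le[OF fin] by fastforce
qed

lemma card_max_sum_free:
  assumes fin: "finite (carrier G)" and S: "max_sum_free G S"
    and M: "subgroup M G" "2 * card M = order G"
  shows "2 * card S = order G"
proof -
  have "card (carrier G - M) \<le> card S"
    using S max_sum_free_complement_of_index_two[OF fin M] unfolding max_sum_free_def by blast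
  moreover have "card (carrier G - M) = card M"
    using card_complement_of_half[OF fin subgroup.subset[OF M(1)] M(2)] .
  ultimately show ?thesis
    using M(2) card_sum_free_le[OF fin] S unfolding max_sum_free_def by fastforce
qed

lemma complement_of_half_sum_free_subgroup:
  assumes fin: "finite (carrier G)" and S: "sum_free G S" "2 * card S = order G"
  shows "subgroup (carrier G - S) G"
proof -
  define M where "M = carrier G - S"
  have S_sub: "S \<subseteq> carrier G" using S unfolding sum_free_def by blast
  have M_half: "2 * card M = order G"
    using card_complement_of_half[OF fin S_sub S(2)] S(2) unfolding M_def by simp
  have M_sub: "M \<subseteq> carrier G" unfolding M_def by blast
  have left: "(\<otimes>) s ` S = M" if s: "s \<in> S" for s
    using translate_eq_complement_of_half[OF fin S_sub S(2) _ sum_free_translate_disjoint[OF S(1) s]]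
      s S_sub unfolding M_def by blast
  have right: "(\<otimes>) s ` M = S" if s: "s \<in> S" for s
  proof -
    have s_carrier: "s \<in> carrier G" using s S_sub by blast
    have "s \<otimes> m \<notin> M" if m: "m \<in> M" for m
    proof
      assume "s \<otimes> m \<in> M"
      then obtain t where "t \<in> S" "s \<otimes> m = s \<otimes> t" using left[OF s] by blast
      then show False using m s_carrier S_sub unfolding M_def by auto
    qed
    then have "(\<otimes>) s ` M = carrier G - M"
      using translate_eq_complement_of_half[OF fin M_sub M_half s_carrier] by blast
    also have "\<dots> = S" using S_sub unfolding M_def by blast
    finally show ?thesis .
  qed
  obtain s where s: "s \<in> S" using S unfolding sum_free_def by blast
  show ?thesis
    unfolding M_def[symmetric]
  proof (rule subgroupI)
    show "M \<subseteq> carrier G" "M \<noteq> {}"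
      using one_notin_sum_free[OF S(1)] unfolding M_def by auto
  next
    fix m assume m: "m \<in> M"
    show "inv m \<in> M"
    proof (rule ccontr)
      assume "inv m \<notin> M"
      then have "inv m \<in> S" using m unfolding M_def by auto
      then have "inv m \<otimes> m \<in> S" using right m by blast
      then show False using m one_notin_sum_free[OF S(1)] unfolding M_def by auto
    qed
  next
    fix a b assume a: "a \<in> M" and b: "b \<in> M"
    obtain t where t: "t \<in> S" "a = s \<otimes> t" using a left[OF s] by blast
    have "t \<otimes> b \<in> S" using right[OF t(1)] b by blast
    moreover have "a \<otimes> b = s \<otimes> (t \<otimes> b)"
      using t b s S_sub M_sub by (simp add: m_assoc subset_iff)
    ultimately show "a \<otimes> b \<in> M" using left[OF s] by blast
  qed
qed

lemma square_mem_maximal_subgroup: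
  assumes M: "maximal_subgroup M G" and sf: "sum_free G (carrier G - M)" and x: "x \<in> carrier G"
  shows "x \<otimes> x \<in> M"
proof (cases "x \<in> M")
  case True
  then show ?thesis using M unfolding maximal_subgroup_def by (simp add: subgroup.m_closed)
next
  case False
  then show ?thesis using sf x unfolding sum_free_def by blast
qed

lemma square_mem_frattini:
  assumes "\<And>M. maximal_subgroup M G \<Longrightarrow> sum_free G (carrier G - M)" and "x \<in> carrier G"
  shows "x \<otimes> x \<in> frattini G"
  using assms square_mem_maximal_subgroup unfolding frattini_def by auto

lemma involution_subgroup:
  assumes "g \<in> carrier G" "g \<otimes> g = \<one>"
  shows "subgroup {\<one>, g} G"
proof (rule subgroupI)
  have "inv g = g" using assms by (simp add: inv_equality)
  then show "\<And>a. a \<in> {\<one>, g} \<Longrightarrow> inv a \<in> {\<one>, g}" by auto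
qed (use assms in auto)

end

locale boolean_group = comm_group +
  assumes square_eq_one: "x \<in> carrier G \<Longrightarrow> x \<otimes> x = \<one>"

lemma elementary_abelian_2_group_iff_boolean_group:
  "elementary_abelian_2_group G \<longleftrightarrow> boolean_group G"
  unfolding elementary_abelian_2_group_def boolean_group_def boolean_group_axioms_def by blast

lemma (in group) boolean_groupI:
  assumes sq: "\<And>x. x \<in> carrier G \<Longrightarrow> x \<otimes> x = \<one>"
  shows "boolean_group G"
proof -
  have inv_id: "inv x = x" if "x \<in> carrier G" for x
    using sq that by (simp add: inv_equality)
  have "comm_group G"
  proof (rule group_comm_groupI)
    fix x y assume xy: "x \<in> carrier G" "y \<in> carrier G"
    have "x \<otimes> y = inv (x \<otimes> y)" using inv_id xy by simp
    also have "\<dots> = inv y \<otimes> inv x" using xy by (simp add: inv_mult_group)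
    also have "\<dots> = y \<otimes> x" using inv_id xy by simp
    finally show "x \<otimes> y = y \<otimes> x" .
  qed
  then show ?thesis using sq by (simp add: boolean_group_def boolean_group_axioms_def)
qed

context boolean_group
begin

lemma subgroup_Un_translate:
  assumes K: "subgroup K G" and g: "g \<in> carrier G"
  shows "subgroup (K \<union> (\<otimes>) g ` K) G"
proof -
  have "{\<one>, g} <#> K = K \<union> (\<otimes>) g ` K"
    using subgroup.mem_carrier[OF K] unfolding set_mult_def by auto
  then show ?thesis
    using mult_subgroups[OF involution_subgroup[OF g square_eq_one[OF g]] K] by simp
qed

lemma maximal_subgroup_index_two:
  assumes fin: "finite (carrier G)" and M: "maximal_subgroup M G"
  shows "2 * card M = order G"
proof -
  have sub: "subgroup M G" and M_sub: "M \<subseteq> carrier G"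
    using M subgroup.subset unfolding maximal_subgroup_def by auto
  obtain g where g: "g \<in> carrier G" "g \<notin> M"
    using M M_sub unfolding maximal_subgroup_def by blast
  have "g \<in> (\<otimes>) g ` M" using g(1) subgroup.one_closed[OF sub] by (metis image_eqI r_one)
  then have "M \<union> (\<otimes>) g ` M = carrier G"
    using M subgroup_Un_translate[OF sub g(1)] g(2) unfolding maximal_subgroup_def by blast
  moreover have "card (M \<union> (\<otimes>) g ` M) = 2 * card M"
    using translate_subgroup_disjoint[OF sub] g card_translate[OF M_sub g(1)]
      finite_subset[OF M_sub fin]
    by (subst card_Un_disjoint) (auto simp: Int_commute)
  ultimately show ?thesis by (simp add: order_def)
qed

lemma ex_maximal_subgroup_avoiding:
  assumes fin: "finite (carrier G)" and x: "x \<in> carrier G" "x \<noteq> \<one>"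
  obtains M where "maximal_subgroup M G" "x \<notin> M"
proof -
  define P where "P = {K. subgroup K G \<and> x \<notin> K}"
  have "P \<subseteq> Pow (carrier G)" unfolding P_def using subgroup.subset by blast
  then have "finite P" using fin by (simp add: finite_subset)
  moreover have "{\<one>} \<in> P" unfolding P_def using x by (simp add: triv_subgroup)
  ultimately obtain K where K: "K \<in> P" and K_max: "\<And>K'. K' \<in> P \<Longrightarrow> K \<subseteq> K' \<Longrightarrow> K = K'"
    using finite_has_maximal[of P] by (metis empty_iff)
  have sub: "subgroup K G" and xK: "x \<notin> K" using K unfolding P_def by auto
  \<comment> \<open>K \<union> y K is a subgroup properly containing K, so it cannot avoid x\<close>
  have y_mem: "y \<in> (\<otimes>) x ` K" if y: "y \<in> carrier G" "y \<notin> K" for y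
  proof -
    have "y \<in> (\<otimes>) y ` K" using y subgroup.one_closed[OF sub] by (metis image_eqI r_one)
    then have "K \<noteq> K \<union> (\<otimes>) y ` K" using y(2) by blast
    then have "x \<in> K \<union> (\<otimes>) y ` K"
      using K_max[of "K \<union> (\<otimes>) y ` K"] subgroup_Un_translate[OF sub y(1)]
      unfolding P_def by blast
    then obtain k where k: "k \<in> K" "x = y \<otimes> k" using xK by blast
    then have "x \<otimes> k = y"
      using y(1) subgroup.mem_carrier[OF sub] square_eq_one by (simp add: m_assoc)
    then show ?thesis using k(1) by blast
  qed
  have "maximal_subgroup K G"
    unfolding maximal_subgroup_def
  proof (intro conjI allI impI)
    fix K' assume "subgroup K' G \<and> K \<subseteq> K'"
    then have K': "subgroup K' G" "K \<subseteq> K'" by auto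
    show "K' = K \<or> K' = carrier G"
    proof (cases "K' = K")
      case False
      then have "x \<in> K'" using K' K_max unfolding P_def by blast
      have "y \<in> K'" if y: "y \<in> carrier G" for y
      proof (cases "y \<in> K")
        case False
        then obtain k where "k \<in> K" "y = x \<otimes> k" using y_mem[OF y] by blast
        then show ?thesis using subgroup.m_closed[OF K'(1) \<open>x \<in> K'\<close>] K'(2) by blast
      qed (use K'(2) in blast)
      then show ?thesis using subgroup.subset[OF K'(1)] by blast
    qed simp
  qed (use sub xK x in auto)
  then show ?thesis using xK that by blast
qed

lemma max_sum_free_iff_complement_of_maximal_subgroup:
  assumes fin: "finite (carrier G)"
  shows "max_sum_free G S \<longleftrightarrow> (\<exists>M. maximal_subgroup M G \<and> S = carrier G - M)"
proof
  assume S: "max_sum_free G S"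
  then have sf: "sum_free G S" unfolding max_sum_free_def by blast
  then obtain s where s: "s \<in> S" "s \<in> carrier G" unfolding sum_free_def by blast
  then have "s \<noteq> \<one>" using one_notin_sum_free[OF sf] by blast
  then obtain M0 where M0: "maximal_subgroup M0 G"
    using ex_maximal_subgroup_avoiding[OF fin s(2)] by blast
  have half: "2 * card S = order G"
    using card_max_sum_free[OF fin S _ maximal_subgroup_index_two[OF fin M0]] M0
    unfolding maximal_subgroup_def by blast
  have sub: "subgroup (carrier G - S) G"
    using complement_of_half_sum_free_subgroup[OF fin sf half] .
  have S_sub: "S \<subseteq> carrier G" using sf unfolding sum_free_def by blast
  have "2 * card (carrier G - S) = order G"
    using card_complement_of_half[OF fin S_sub half] half by simp
  then have "maximal_subgroup (carrier G - S) G"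
    using index_two_subgroup_maximal[OF fin sub] by blast
  moreover have "S = carrier G - (carrier G - S)" using S_sub by blast
  ultimately show "\<exists>M. maximal_subgroup M G \<and> S = carrier G - M" by blast
next
  assume "\<exists>M. maximal_subgroup M G \<and> S = carrier G - M"
  then obtain M where M: "maximal_subgroup M G" "S = carrier G - M" by blast
  then show "max_sum_free G S"
    using max_sum_free_complement_of_index_two[OF fin _ maximal_subgroup_index_two[OF fin M(1)]]
    unfolding maximal_subgroup_def by blast
qed

lemma frattini_eq_one:
  assumes fin: "finite (carrier G)"
  shows "frattini G = {\<one>}"
proof
  show "frattini G \<subseteq> {\<one>}"
    using ex_maximal_subgroup_avoiding[OF fin] unfolding frattini_def by blast
  show "{\<one>} \<subseteq> frattini G"
    unfolding frattini_def maximal_subgroup_def using subgroup.one_closed by auto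
qed

end

theorem theorem2:
  fixes G :: "('a, 'b) monoid_scheme"
  assumes "group G" and "finite (carrier G)"
  shows "elementary_abelian_2_group G \<longleftrightarrow>
    ({S. max_sum_free G S} = {carrier G - M | M. maximal_subgroup M G} \<and>
     frattini G = {\<one>\<^bsub>G\<^esub>})"
proof
  assume "elementary_abelian_2_group G"
  then interpret boolean_group G by (simp add: elementary_abelian_2_group_iff_boolean_group)
  show "{S. max_sum_free G S} = {carrier G - M | M. maximal_subgroup M G} \<and>
     frattini G = {\<one>\<^bsub>G\<^esub>}"
    using max_sum_free_iff_complement_of_maximal_subgroup[OF assms(2)] frattini_eq_one[OF assms(2)]
    by blast
next
  assume H: "{S. max_sum_free G S} = {carrier G - M | M. maximal_subgroup M G} \<and>
     frattini G = {\<one>\<^bsub>G\<^esub>}"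
  interpret group G by (rule assms(1))
  have "sum_free G (carrier G - M)" if "maximal_subgroup M G" for M
    using H that unfolding max_sum_free_def by blast
  then have "boolean_group G"
    using boolean_groupI square_mem_frattini H by blast
  then show "elementary_abelian_2_group G"
    by (simp add: elementary_abelian_2_group_iff_boolean_group)
qed

end
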